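(* Let $f:\{0,1\}^N\to\{0,1\}$ be a non-constant total function. Then there is a promise $P\subseteq\{0,1\}^N$ such that \[\R(f|_P)=1,\qquad \R_0(f|_P)\ge\frac{\R_0(f)^{1/3}}{6}.\]
   Context: $f|_P$ is the restriction of $f$ to $P$ (a partial function). $\R$ is bounded-error (error at most $1/3$) randomized query complexity and $\R_0$ zero-error randomized query complexity (maximum over inputs in the domain of the expected number of queries); algorithms need only be correct on the domain. *)

theory Defs
  imports Complex_Main "HOL-Probability.Probability_Mass_Function"
begin

text \<open>Inputs in {0,1}^N are boolean lists of length N. A deterministic decision tree
  either outputs a bit or queries position i and branches on the answer.\<close>

datatype dtree = Leaf bool | Node nat dtree dtree

definition cube :: "nat \<Rightarrow> bool list set" where
  "cube N = {x. length x = N}"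

fun eval :: "dtree \<Rightarrow> bool list \<Rightarrow> bool" where
  "eval (Leaf b) x = b"
| "eval (Node i l r) x = (if x ! i then eval r x else eval l x)"

fun qcount :: "dtree \<Rightarrow> bool list \<Rightarrow> nat" where
  "qcount (Leaf b) x = 0"
| "qcount (Node i l r) x = Suc (if x ! i then qcount r x else qcount l x)"

fun valid :: "nat \<Rightarrow> dtree \<Rightarrow> bool" where
  "valid N (Leaf b) = True"
| "valid N (Node i l r) = (i < N \<and> valid N l \<and> valid N r)"

definition valid_alg :: "nat \<Rightarrow> dtree pmf \<Rightarrow> bool" where
  "valid_alg N A = (\<forall>t\<in>set_pmf A. valid N t)"

definition R_alg :: "nat \<Rightarrow> (bool list \<Rightarrow> bool) \<Rightarrow> bool list set \<Rightarrow> nat \<Rightarrow> bool" where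
  "R_alg N f P d = (\<exists>A. valid_alg N A
      \<and> (\<forall>x\<in>P. measure_pmf.prob A {t. eval t x \<noteq> f x} \<le> 1/3)
      \<and> (\<forall>t\<in>set_pmf A. \<forall>x\<in>P. qcount t x \<le> d))"

definition R :: "nat \<Rightarrow> (bool list \<Rightarrow> bool) \<Rightarrow> bool list set \<Rightarrow> nat" where
  "R N f P = (LEAST d. R_alg N f P d)"

text \<open>Computed in ennreal (so infinite expectations are
  not lost); it is always finite (at most N), so we convert to real.\<close>
definition R0 :: "nat \<Rightarrow> (bool list \<Rightarrow> bool) \<Rightarrow> bool list set \<Rightarrow> real" where
  "R0 N f P = enn2real (INF A \<in> {A. valid_alg N A \<and> (\<forall>t\<in>set_pmf A. \<forall>x\<in>P. eval t x = f x)}.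
      SUP x\<in>P. \<integral>\<^sup>+ t. ennreal (real (qcount t x)) \<partial>(measure_pmf A))"

end

theory Submission
  imports Defs
begin

text \<open>
  Let \<open>b\<close> be the block sensitivity of \<open>f\<close>. By Nisan's argument \<open>f\<close> has a decision tree of
  depth \<open>b\<^sup>3\<close>, so \<open>R\<^sub>0(f) \<le> b\<^sup>3\<close>. Conversely, from \<open>b\<close> disjoint sensitive blocks at some input
  one extracts an input \<open>z\<close>, a nonempty family \<open>U\<close> of these blocks and many subfamilies
  \<open>D \<subseteq> U\<close>, each containing two thirds of \<open>U\<close>, such that flipping \<open>\<Union>D\<close> changes the value
  at \<open>z\<close>, and such that every set of fewer than \<open>b/6\<close> blocks is avoided by one of the \<open>D\<close>.
  On the promise consisting of \<open>z\<close> and these flips, querying one position of a uniformly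
  random block of \<open>U\<close> errs with probability at most \<open>1/3\<close>, while a zero-error algorithm
  must query at least \<open>b/6\<close> positions on \<open>z\<close>, since otherwise it cannot tell \<open>z\<close> from
  some flip.
\<close>

definition flip :: "nat set \<Rightarrow> bool list \<Rightarrow> bool list" where
  "flip B x = map (\<lambda>i. x!i \<noteq> (i\<in>B)) [0..<length x]"

lemma length_flip [simp]: "length (flip B x) = length x"
  by (simp add: flip_def)

lemma nth_flip [simp]: "i < length x \<Longrightarrow> flip B x ! i = (x!i \<noteq> (i\<in>B))"
  by (simp add: flip_def)

lemma flip_in_cube [simp]: "x \<in> cube N \<Longrightarrow> flip B x \<in> cube N"
  by (simp add: cube_def)

lemma flip_empty [simp]: "flip {} x = x"
  by (rule nth_equalityI) auto

lemma flip_flip: "flip A (flip B x) = flip ((A - B) \<union> (B - A)) x"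
  by (rule nth_equalityI) auto

lemma flip_flip_disjoint: "A \<inter> B = {} \<Longrightarrow> flip A (flip B x) = flip (A \<union> B) x"
  by (simp add: flip_flip Int_commute Diff_triv)

lemma flip_disagreements:
  "x \<in> cube N \<Longrightarrow> y \<in> cube N \<Longrightarrow> flip {i. i < N \<and> x!i \<noteq> y!i} x = y"
  by (rule nth_equalityI) (auto simp: cube_def)

lemma replicate_in_cube: "replicate N b \<in> cube N"
  by (simp add: cube_def)

section \<open>Block sensitivity\<close>

definition sensitive_blocks :: "nat \<Rightarrow> (bool list \<Rightarrow> bool) \<Rightarrow> bool list \<Rightarrow> nat set set \<Rightarrow> bool" where
  "sensitive_blocks N f x BB \<longleftrightarrow>
     BB \<subseteq> Pow {..<N} \<and> pairwise disjnt BB \<and> (\<forall>B\<in>BB. B \<noteq> {} \<and> f (flip B x) \<noteq> f x)"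

lemma sensitive_blocks_finite: "sensitive_blocks N f x BB \<Longrightarrow> finite BB"
  unfolding sensitive_blocks_def by (meson finite_Pow_iff finite_lessThan finite_subset)

lemma card_blocks_meeting_le:
  assumes "pairwise disjnt BB" "finite Q"
  shows "card {B\<in>BB. B \<inter> Q \<noteq> {}} \<le> card Q"
proof -
  let ?H = "{B\<in>BB. B \<inter> Q \<noteq> {}}"
  let ?g = "\<lambda>B. SOME q. q \<in> B \<inter> Q"
  have g: "?g B \<in> B \<inter> Q" if "B \<in> ?H" for B
  proof -
    from that obtain q where "q \<in> B \<inter> Q"
      by blast
    then show ?thesis
      by (rule someI)
  qed
  have "inj_on ?g ?H"
  proof (rule inj_onI)
    fix B1 B2 assume B: "B1 \<in> ?H" "B2 \<in> ?H" "?g B1 = ?g B2"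
    then have "\<not> disjnt B1 B2"
      using g[OF B(1)] g[OF B(2)] by (auto simp: disjnt_def)
    with B(1,2) assms(1) show "B1 = B2"
      unfolding pairwise_def by blast
  qed
  moreover have "?g ` ?H \<subseteq> Q"
    using g by blast
  ultimately show ?thesis
    using assms(2) by (rule card_inj_on_le)
qed

lemma card_sensitive_blocks_le:
  assumes "sensitive_blocks N f x BB"
  shows "card BB \<le> N"
proof -
  have "{B\<in>BB. B \<inter> {..<N} \<noteq> {}} = BB"
    using assms unfolding sensitive_blocks_def by blast
  then show ?thesis
    using card_blocks_meeting_le[of BB "{..<N}"] assms unfolding sensitive_blocks_def by simp
qed

definition bs :: "nat \<Rightarrow> (bool list \<Rightarrow> bool) \<Rightarrow> nat" where
  "bs N f = Max {card BB | x BB. x \<in> cube N \<and> sensitive_blocks N f x BB}"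

lemma finite_block_counts: "finite {card BB | x BB. x \<in> cube N \<and> sensitive_blocks N f x BB}"
  by (rule finite_subset[of _ "{..N}"]) (auto dest: card_sensitive_blocks_le)

lemma card_le_bs: "x \<in> cube N \<Longrightarrow> sensitive_blocks N f x BB \<Longrightarrow> card BB \<le> bs N f"
  unfolding bs_def by (rule Max_ge[OF finite_block_counts]) blast

lemma bs_attained: obtains x BB where "x \<in> cube N" "sensitive_blocks N f x BB" "card BB = bs N f"
proof -
  have "sensitive_blocks N f (replicate N False) {}"
    by (simp add: sensitive_blocks_def)
  then have "{card BB | x BB. x \<in> cube N \<and> sensitive_blocks N f x BB} \<noteq> {}"
    using replicate_in_cube by blast
  from Max_in[OF finite_block_counts this] obtain x BB
    where "bs N f = card BB" "x \<in> cube N" "sensitive_blocks N f x BB"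
    unfolding bs_def by blast
  then show thesis
    using that by simp
qed

lemma bs_pos:
  assumes "x \<in> cube N" "y \<in> cube N" "f x \<noteq> f y"
  shows "0 < bs N f"
proof -
  let ?D = "{i. i < N \<and> x!i \<noteq> y!i}"
  have flipD: "flip ?D x = y"
    using flip_disagreements[OF assms(1,2)] .
  have "?D \<noteq> {}"
  proof
    assume "?D = {}"
    with flipD assms(3) show False
      by (metis flip_empty)
  qed
  with flipD assms(3) have "sensitive_blocks N f x {?D}"
    unfolding sensitive_blocks_def by auto
  then have "card {?D} \<le> bs N f"
    by (rule card_le_bs[OF assms(1)])
  then show ?thesis
    by simp
qed

section \<open>Certificates\<close>

definition certificate :: "nat \<Rightarrow> (bool list \<Rightarrow> bool) \<Rightarrow> bool list \<Rightarrow> nat set \<Rightarrow> bool" where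
  "certificate N f y K \<longleftrightarrow> K \<subseteq> {..<N} \<and> (\<forall>x\<in>cube N. (\<forall>i\<in>K. x!i = y!i) \<longrightarrow> f x = f y)"

definition minimal_sensitive_block :: "(bool list \<Rightarrow> bool) \<Rightarrow> bool list \<Rightarrow> nat set \<Rightarrow> bool" where
  "minimal_sensitive_block f y B \<longleftrightarrow>
     B \<noteq> {} \<and> f (flip B y) \<noteq> f y \<and> (\<forall>C. C \<subset> B \<longrightarrow> f (flip C y) = f y)"

lemma minimal_sensitive_block_exists:
  assumes "finite B" "f (flip B y) \<noteq> f y"
  obtains M where "M \<subseteq> B" "minimal_sensitive_block f y M"
proof -
  obtain M where M: "M \<subseteq> B" "f (flip M y) \<noteq> f y"
    and least: "\<And>C. C \<subseteq> B \<Longrightarrow> f (flip C y) \<noteq> f y \<Longrightarrow> card M \<le> card C"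
    using ex_has_least_nat[of "\<lambda>C. C \<subseteq> B \<and> f (flip C y) \<noteq> f y" B card] assms(2) by blast
  have "finite M"
    using M(1) assms(1) finite_subset by blast
  have "f (flip C y) = f y" if "C \<subset> M" for C
  proof (rule ccontr)
    assume "f (flip C y) \<noteq> f y"
    with that M(1) have "card M \<le> card C"
      by (intro least) auto
    moreover have "card C < card M"
      using \<open>finite M\<close> that by (rule psubset_card_mono)
    ultimately show False
      by simp
  qed
  moreover have "M \<noteq> {}"
    using M(2) by auto
  ultimately show thesis
    using that M unfolding minimal_sensitive_block_def by blast
qed

text \<open>At \<open>flip B y\<close> every singleton \<open>{j}\<close> with \<open>j \<in> B\<close> is a sensitive block.\<close>

lemma card_minimal_sensitive_block_le_bs:
  assumes y: "y \<in> cube N" and B: "minimal_sensitive_block f y B" "B \<subseteq> {..<N}"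
  shows "card B \<le> bs N f"
proof -
  have "f (flip {j} (flip B y)) \<noteq> f (flip B y)" if "j \<in> B" for j
  proof -
    have "flip {j} (flip B y) = flip (B - {j}) y"
      using that by (simp add: flip_flip insert_Diff_if)
    moreover have "f (flip (B - {j}) y) = f y"
      using B(1) that unfolding minimal_sensitive_block_def by blast
    ultimately show ?thesis
      using B(1) unfolding minimal_sensitive_block_def by simp
  qed
  then have "sensitive_blocks N f (flip B y) ((\<lambda>j. {j}) ` B)"
    using B(2) unfolding sensitive_blocks_def by (auto simp: pairwise_def disjnt_def)
  then have "card ((\<lambda>j. {j}) ` B) \<le> bs N f"
    using y by (intro card_le_bs) simp_all
  then show ?thesis
    by (simp add: card_image)
qed

text \<open>The union of a maximal disjoint family of minimal sensitive blocks is a certificate.\<close>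

lemma certificate_exists:
  assumes y: "y \<in> cube N"
  obtains K where "certificate N f y K" "card K \<le> bs N f ^ 2"
proof -
  define admissible where "admissible MM \<longleftrightarrow>
    MM \<subseteq> Pow {..<N} \<and> pairwise disjnt MM \<and> (\<forall>B\<in>MM. minimal_sensitive_block f y B)" for MM
  have sensitive: "sensitive_blocks N f y MM" if "admissible MM" for MM
    using that unfolding admissible_def sensitive_blocks_def minimal_sensitive_block_def by blast
  have "admissible {}"
    by (simp add: admissible_def)
  then obtain MM where MM: "admissible MM"
    and maximal: "\<And>MM'. admissible MM' \<Longrightarrow> card MM' \<le> card MM"
    using Lattices_Big.ex_has_greatest_nat[of admissible "{}" card "Suc N"]
      card_sensitive_blocks_le[OF sensitive] by (metis le_imp_less_Suc)
  have "certificate N f y (\<Union>MM)"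
    unfolding certificate_def
  proof (intro conjI ballI impI)
    show "\<Union>MM \<subseteq> {..<N}"
      using MM(1) unfolding admissible_def by auto
    fix x assume x: "x \<in> cube N" and agree: "\<forall>i\<in>\<Union>MM. x!i = y!i"
    show "f x = f y"
    proof (rule ccontr)
      assume "f x \<noteq> f y"
      then have "f (flip {i. i < N \<and> y!i \<noteq> x!i} y) \<noteq> f y"
        using flip_disagreements[OF y x] by simp
      moreover have "finite {i. i < N \<and> y!i \<noteq> x!i}"
        by (rule finite_subset[of _ "{..<N}"]) auto
      ultimately obtain M where M: "M \<subseteq> {i. i < N \<and> y!i \<noteq> x!i}" "minimal_sensitive_block f y M"
        using minimal_sensitive_block_exists by blast
      have "M \<inter> \<Union>MM = {}"
        using M(1) agree by auto
      moreover have "M \<noteq> {}"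
        using M(2) unfolding minimal_sensitive_block_def by blast
      ultimately have "admissible (insert M MM)" "M \<notin> MM"
        using MM(1) M unfolding admissible_def pairwise_insert
        by (auto simp: disjnt_def)
      then show False
        using maximal[of "insert M MM"] sensitive_blocks_finite[OF sensitive[OF MM]] by simp
    qed
  qed
  moreover have "card (\<Union>MM) \<le> bs N f ^ 2"
  proof -
    have "card (\<Union>MM) \<le> sum card MM"
      by (rule card_Union_le_sum_card)
    also have "\<dots> \<le> card MM * bs N f"
    proof -
      have "card B \<le> bs N f" if "B \<in> MM" for B
        using MM(1) that card_minimal_sensitive_block_le_bs[OF y] unfolding admissible_def by blast
      then show ?thesis
        using sum_bounded_above[of MM card "bs N f"] by simp
    qed
    also have "\<dots> \<le> bs N f * bs N f"
      using card_le_bs[OF y sensitive[OF MM(1)]] by simp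
    finally show ?thesis
      by (simp add: power2_eq_square)
  qed
  ultimately show thesis
    using that by blast
qed

definition computable_within :: "nat \<Rightarrow> (bool list \<Rightarrow> bool) \<Rightarrow> bool list set \<Rightarrow> nat \<Rightarrow> bool" where
  "computable_within N f S d \<longleftrightarrow> (\<exists>t. valid N t \<and> (\<forall>x\<in>S. eval t x = f x \<and> qcount t x \<le> d))"

lemma computable_within_const: "\<forall>x\<in>S. f x = c \<Longrightarrow> computable_within N f S d"
  unfolding computable_within_def by (rule exI[of _ "Leaf c"]) auto

lemma computable_within_mono:
  "computable_within N f S d \<Longrightarrow> S' \<subseteq> S \<Longrightarrow> d \<le> d' \<Longrightarrow> computable_within N f S' d'"
  unfolding computable_within_def by (meson order_trans subsetD)

lemma computable_within_query:
  assumes "i < N" "computable_within N f {x\<in>S. \<not> x!i} d" "computable_within N f {x\<in>S. x!i} d"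
  shows "computable_within N f S (Suc d)"
proof -
  obtain l r where "valid N l" "\<forall>x\<in>{x\<in>S. \<not> x!i}. eval l x = f x \<and> qcount l x \<le> d"
    "valid N r" "\<forall>x\<in>{x\<in>S. x!i}. eval r x = f x \<and> qcount r x \<le> d"
    using assms(2,3) unfolding computable_within_def by blast
  then show ?thesis
    unfolding computable_within_def using assms(1) by (intro exI[of _ "Node i l r"]) auto
qed

lemma computable_within_query_set:
  assumes "finite K" "K \<subseteq> {..<N}"
    and "\<And>\<beta>. computable_within N f {x\<in>S. \<forall>i\<in>K. x!i = \<beta> i} d"
  shows "computable_within N f S (card K + d)"
  using assms
proof (induction K arbitrary: S rule: finite_induct)
  case empty
  then show ?case by simp
next
  case (insert i K)
  have branch: "computable_within N f {x\<in>S. x!i = c} (card K + d)" for c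
  proof (rule insert.IH)
    fix \<beta>
    have restrict: "{x\<in>{x\<in>S. x!i = c}. \<forall>j\<in>K. x!j = \<beta> j} = {x\<in>S. \<forall>j\<in>insert i K. x!j = (\<beta>(i:=c)) j}"
      using insert.hyps(2) by auto
    show "computable_within N f {x\<in>{x\<in>S. x!i = c}. \<forall>j\<in>K. x!j = \<beta> j} d"
      unfolding restrict by (rule insert.prems(2))
  qed (use insert.prems(1) in simp)
  have "computable_within N f S (Suc (card K + d))"
    using insert.prems(1) branch[of False] branch[of True] by (intro computable_within_query[of i]) auto
  then show ?case
    using insert.hyps by simp
qed

section \<open>Nisan's bound \<open>D(f) \<le> bs(f)\<^sup>3\<close>\<close>

lemma extend_sensitive_blocks:
  assumes y: "y \<in> cube N" "certificate N f y K"
    and z: "z \<in> cube N" "f z \<noteq> f y" "\<forall>i\<in>Q. z!i = y!i"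
    and BB: "sensitive_blocks N f z BB" "\<Union>BB \<subseteq> Q"
  defines "B \<equiv> {i\<in>K. z!i \<noteq> y!i}"
  shows "sensitive_blocks N f z (insert B BB)" "card (insert B BB) = Suc (card BB)"
    "\<Union>(insert B BB) \<subseteq> Q \<union> K"
proof -
  have K: "K \<subseteq> {..<N}"
    using y(2) unfolding certificate_def by blast
  have "B \<noteq> {}"
    using y(2) z(1,2) unfolding certificate_def B_def by blast
  moreover have "f (flip B z) \<noteq> f z"
  proof -
    have "\<forall>i\<in>K. flip B z ! i = y!i"
      using K z(1) by (auto simp: cube_def B_def)
    then show ?thesis
      using y(2) z(1,2) unfolding certificate_def by (metis flip_in_cube)
  qed
  moreover have "\<forall>C\<in>BB. disjnt B C"
    using z(3) BB(2) by (auto simp: disjnt_def B_def)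
  ultimately show "sensitive_blocks N f z (insert B BB)"
    using BB(1) K unfolding sensitive_blocks_def pairwise_insert B_def
    by (auto simp: disjnt_sym)
  from \<open>B \<noteq> {}\<close> \<open>\<forall>C\<in>BB. disjnt B C\<close> have "B \<notin> BB"
    by (auto simp: disjnt_def)
  then show "card (insert B BB) = Suc (card BB)"
    using sensitive_blocks_finite[OF BB(1)] by simp
  show "\<Union>(insert B BB) \<subseteq> Q \<union> K"
    using BB(2) by (auto simp: B_def)
qed

text \<open>
  Querying a certificate \<open>K\<close> of a \<open>1\<close>-input \<open>y\<close> of \<open>S\<close> gives every \<open>0\<close>-input consistent with
  the answers a new sensitive block inside \<open>K\<close>, disjoint from the blocks found so far; so
  after \<open>bs(f)\<close> rounds the \<open>0\<close>-inputs or the \<open>1\<close>-inputs are exhausted.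
\<close>

lemma computable_within_rounds:
  assumes "S \<subseteq> cube N" "\<forall>x\<in>S. \<forall>y\<in>S. \<forall>i\<in>Q. x!i = y!i"
    and "\<forall>z\<in>S. \<not> f z \<longrightarrow> (\<exists>BB. sensitive_blocks N f z BB \<and> \<Union>BB \<subseteq> Q \<and> bs N f \<le> card BB + n)"
  shows "computable_within N f S (n * bs N f ^ 2)"
  using assms
proof (induction n arbitrary: S Q)
  case 0
  show ?case
  proof (cases "\<exists>y\<in>S. f y")
    case True
    then obtain y where y: "y \<in> S" "f y" by blast
    obtain K where K: "certificate N f y K"
      using certificate_exists y "0.prems"(1) by blast
    have "f z" if z: "z \<in> S" for z
    proof (rule ccontr)
      assume "\<not> f z"
      then obtain BB where BB: "sensitive_blocks N f z BB" "\<Union>BB \<subseteq> Q" "bs N f \<le> card BB"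
        using "0.prems"(3)[rule_format, OF z] by (metis add_0_right)
      have cube: "y \<in> cube N" "z \<in> cube N"
        using "0.prems"(1) y(1) z by auto
      have "f z \<noteq> f y" "\<forall>i\<in>Q. z!i = y!i"
        using \<open>\<not> f z\<close> y "0.prems"(2)[rule_format, OF z y(1)] by auto
      from extend_sensitive_blocks[OF cube(1) K cube(2) this BB(1,2)]
      have "Suc (card BB) \<le> bs N f"
        using card_le_bs[OF cube(2)] by metis
      with BB(3) show False
        by simp
    qed
    then show ?thesis
      by (intro computable_within_const[of _ _ True]) simp
  qed (auto intro: computable_within_const[of _ _ False])
next
  case (Suc n)
  show ?case
  proof (cases "\<exists>y\<in>S. f y")
    case True
    then obtain y where y: "y \<in> S" "f y" by blast
    have ycube: "y \<in> cube N"
      using y Suc.prems(1) by blast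
    obtain K where K: "certificate N f y K" "card K \<le> bs N f ^ 2"
      using certificate_exists[OF ycube] by blast
    have KN: "K \<subseteq> {..<N}"
      using K(1) unfolding certificate_def by blast
    have rounds: "computable_within N f {x\<in>S. \<forall>i\<in>K. x!i = \<beta> i} (n * bs N f ^ 2)" for \<beta>
    proof (rule Suc.IH[where Q = "Q \<union> K"])
      show "{x\<in>S. \<forall>i\<in>K. x!i = \<beta> i} \<subseteq> cube N"
        using Suc.prems(1) by blast
      show "\<forall>x\<in>{x\<in>S. \<forall>i\<in>K. x!i = \<beta> i}. \<forall>y\<in>{x\<in>S. \<forall>i\<in>K. x!i = \<beta> i}. \<forall>i\<in>Q \<union> K. x!i = y!i"
        using Suc.prems(2) by auto
      show "\<forall>z\<in>{x\<in>S. \<forall>i\<in>K. x!i = \<beta> i}. \<not> f z \<longrightarrow>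
          (\<exists>BB. sensitive_blocks N f z BB \<and> \<Union>BB \<subseteq> Q \<union> K \<and> bs N f \<le> card BB + n)"
      proof (intro ballI impI)
        fix z assume "z \<in> {x\<in>S. \<forall>i\<in>K. x!i = \<beta> i}" "\<not> f z"
        then have z: "z \<in> S" "\<not> f z"
          by simp_all
        obtain BB where BB: "sensitive_blocks N f z BB" "\<Union>BB \<subseteq> Q" "bs N f \<le> card BB + Suc n"
          using Suc.prems(3)[rule_format, OF z] by meson
        have "z \<in> cube N" "f z \<noteq> f y" "\<forall>i\<in>Q. z!i = y!i"
          using Suc.prems(1) Suc.prems(2)[rule_format, OF z(1) y(1)] z y by auto
        from extend_sensitive_blocks[OF ycube K(1) this BB(1,2)] BB(3)
        show "\<exists>BB. sensitive_blocks N f z BB \<and> \<Union>BB \<subseteq> Q \<union> K \<and> bs N f \<le> card BB + n"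
          by (intro exI[of _ "insert {i\<in>K. z!i \<noteq> y!i} BB"]) simp
      qed
    qed
    have "finite K"
      using KN finite_subset by blast
    from computable_within_query_set[OF this KN rounds]
    have "computable_within N f S (card K + n * bs N f ^ 2)" .
    then show ?thesis
      by (rule computable_within_mono) (use K(2) in simp_all)
  qed (auto intro: computable_within_const[of _ _ False])
qed

lemma computable_within_bs_cube: "computable_within N f (cube N) (bs N f ^ 3)"
proof -
  have "computable_within N f (cube N) (bs N f * bs N f ^ 2)"
    by (rule computable_within_rounds[where Q = "{}"])
      (auto intro: exI[of _ "{}"] simp: sensitive_blocks_def)
  then show ?thesis
    by (simp add: power3_eq_cube power2_eq_square mult.assoc)
qed

section \<open>The hard subfamilies of blocks\<close>

text \<open>
  If some small set \<open>H\<close> of blocks is hit by every large subfamily sensitive at \<open>x\<close>, move to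
  \<open>z = flip B\<^sub>0 x\<close> for a block \<open>B\<^sub>0 \<notin> H\<close>: flipping a large subfamily \<open>D\<close> of the remaining
  blocks at \<open>z\<close> gives \<open>flip (\<Union>(insert B\<^sub>0 D)) x\<close>, which has the value \<open>f x \<noteq> f z\<close>.
\<close>

lemma hard_subfamilies_around_flip:
  assumes x: "x \<in> cube N" and BB: "sensitive_blocks N f x BB" "card BB = b"
    and H: "H \<subseteq> BB" "6 * card H < b"
    and insensitive: "\<And>D. D \<subseteq> BB - H \<Longrightarrow> 2 * b \<le> 3 * card D \<Longrightarrow> f (flip (\<Union>D) x) = f x"
  obtains z U DD where "z \<in> cube N" "U \<subseteq> BB" "U \<noteq> {}"
    "\<forall>D\<in>DD. D \<subseteq> U \<and> 2 * card U \<le> 3 * card D \<and> f (flip (\<Union>D) z) \<noteq> f z"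
    "\<forall>H'\<subseteq>BB. 6 * card H' < b \<longrightarrow> (\<exists>D\<in>DD. D \<inter> H' = {})"
proof -
  have finBB: "finite BB"
    using sensitive_blocks_finite[OF BB(1)] .
  have finH: "finite H"
    using H(1) finBB finite_subset by blast
  have card_rest: "card (BB - H) = b - card H"
    using H(1) finH BB(2) by (simp add: card_Diff_subset)
  then have "card (BB - H) \<noteq> 0"
    using H(2) by simp
  then have "BB - H \<noteq> {}"
    by (metis card.empty)
  then obtain B0 where B0: "B0 \<in> BB - H"
    by blast
  define z where "z = flip B0 x"
  define U where "U = BB - H - {B0}"
  define DD where "DD = {D. D \<subseteq> U \<and> 2 * card U \<le> 3 * card D \<and> 2 * b \<le> 3 * card D + 3}"
  have cardU: "card U + card H + 1 = b"
    using card_rest B0 finBB H(2) unfolding U_def by simp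
  have "B0 \<in> BB"
    using B0 by simp
  then have fz: "f z \<noteq> f x"
    using BB(1) unfolding sensitive_blocks_def z_def by simp
  have flip_back: "f (flip (\<Union>D) z) = f x" if D: "D \<subseteq> U" "2 * b \<le> 3 * card D + 3" for D
  proof -
    have "disjnt B B0" if "B \<in> D" for B
      using BB(1) \<open>B0 \<in> BB\<close> D(1) that unfolding U_def sensitive_blocks_def
      by (metis DiffD1 DiffD2 insertI1 pairwiseD subsetD)
    then have "\<Union>D \<inter> B0 = {}"
      by (auto simp: disjnt_def)
    then have "flip (\<Union>D) z = flip (\<Union>(insert B0 D)) x"
      unfolding z_def by (simp add: flip_flip_disjoint Un_commute)
    moreover have "card (insert B0 D) = card D + 1"
    proof -
      have "finite D"
        using D(1) finBB unfolding U_def by (meson Diff_subset finite_subset subset_trans)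
      moreover have "B0 \<notin> D"
        using D(1) unfolding U_def by blast
      ultimately show ?thesis
        by simp
    qed
    moreover have "insert B0 D \<subseteq> BB - H"
      using D(1) B0 unfolding U_def by blast
    ultimately show ?thesis
      using insensitive[of "insert B0 D"] D(2) by simp
  qed
  have U: "U \<noteq> {}"
  proof
    assume "U = {}"
    then have "b = 1"
      using cardU H(2) by simp
    then have "f (flip (\<Union>{}) z) = f x"
      by (intro flip_back) simp_all
    with fz show False
      by simp
  qed
  have avoid: "\<exists>D\<in>DD. D \<inter> H' = {}" if H': "H' \<subseteq> BB" "6 * card H' < b" for H'
  proof -
    have "card U - card H' \<le> card (U - H')"
      using H' finBB by (intro diff_card_le_card_Diff) (simp add: finite_subset)
    then have "card U \<le> card (U - H') + card H'"
      by (simp add: le_diff_conv)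
    moreover have "6 * card H + 1 \<le> b" "6 * card H' + 1 \<le> b"
      using H(2) H'(2) by simp_all
    ultimately have "2 * card U \<le> 3 * card (U - H')" "2 * b \<le> 3 * card (U - H') + 3"
      using cardU by linarith+
    then have "U - H' \<in> DD"
      unfolding DD_def by blast
    then show ?thesis
      by blast
  qed
  show thesis
  proof (rule that[of z U DD])
    show "z \<in> cube N"
      using x by (simp add: z_def)
    show "U \<subseteq> BB"
      by (auto simp: U_def)
    show "\<forall>D\<in>DD. D \<subseteq> U \<and> 2 * card U \<le> 3 * card D \<and> f (flip (\<Union>D) z) \<noteq> f z"
    proof
      fix D assume "D \<in> DD"
      then have D: "D \<subseteq> U" "2 * card U \<le> 3 * card D" "2 * b \<le> 3 * card D + 3"
        unfolding DD_def by auto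
      with flip_back[OF D(1,3)] fz show "D \<subseteq> U \<and> 2 * card U \<le> 3 * card D \<and> f (flip (\<Union>D) z) \<noteq> f z"
        by simp
    qed
    show "\<forall>H'\<subseteq>BB. 6 * card H' < b \<longrightarrow> (\<exists>D\<in>DD. D \<inter> H' = {})"
      using avoid by blast
  qed (rule U)
qed

lemma hard_subfamilies:
  assumes x: "x \<in> cube N" and BB: "sensitive_blocks N f x BB" "card BB = b" "0 < b"
  obtains z U DD where "z \<in> cube N" "U \<subseteq> BB" "U \<noteq> {}"
    "\<forall>D\<in>DD. D \<subseteq> U \<and> 2 * card U \<le> 3 * card D \<and> f (flip (\<Union>D) z) \<noteq> f z"
    "\<forall>H\<subseteq>BB. 6 * card H < b \<longrightarrow> (\<exists>D\<in>DD. D \<inter> H = {})"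
proof (cases "\<forall>H\<subseteq>BB. 6 * card H < b \<longrightarrow>
    (\<exists>D\<subseteq>BB - H. 2 * b \<le> 3 * card D \<and> f (flip (\<Union>D) x) \<noteq> f x)")
  case True
  show thesis
  proof (rule that[of x BB "{D. D \<subseteq> BB \<and> 2 * b \<le> 3 * card D \<and> f (flip (\<Union>D) x) \<noteq> f x}"])
    show "\<forall>H\<subseteq>BB. 6 * card H < b \<longrightarrow>
        (\<exists>D\<in>{D. D \<subseteq> BB \<and> 2 * b \<le> 3 * card D \<and> f (flip (\<Union>D) x) \<noteq> f x}. D \<inter> H = {})"
    proof (intro allI impI)
      fix H assume "H \<subseteq> BB" "6 * card H < b"
      then obtain D where "D \<subseteq> BB - H" "2 * b \<le> 3 * card D" "f (flip (\<Union>D) x) \<noteq> f x"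
        using True by blast
      then show "\<exists>D\<in>{D. D \<subseteq> BB \<and> 2 * b \<le> 3 * card D \<and> f (flip (\<Union>D) x) \<noteq> f x}. D \<inter> H = {}"
        by blast
    qed
  qed (use x BB in auto)
next
  case False
  then obtain H where "H \<subseteq> BB" "6 * card H < b"
    "\<And>D. D \<subseteq> BB - H \<Longrightarrow> 2 * b \<le> 3 * card D \<Longrightarrow> f (flip (\<Union>D) x) = f x"
    by blast
  from hard_subfamilies_around_flip[OF x BB(1,2) this] that show thesis
    by blast
qed

lemma avoid_few_positions:
  assumes BB: "pairwise disjnt BB" and DD: "\<forall>D\<in>DD. D \<subseteq> BB"
    and avoid: "\<forall>H\<subseteq>BB. 6 * card H < b \<longrightarrow> (\<exists>D\<in>DD. D \<inter> H = {})"
    and Q: "finite Q" "6 * card Q < b"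
  shows "\<exists>D\<in>DD. \<Union>D \<inter> Q = {}"
proof -
  have "6 * card {B\<in>BB. B \<inter> Q \<noteq> {}} < b"
    using card_blocks_meeting_le[OF BB Q(1)] Q(2) by linarith
  moreover have "{B\<in>BB. B \<inter> Q \<noteq> {}} \<subseteq> BB"
    by blast
  ultimately obtain D where D: "D \<in> DD" "D \<inter> {B\<in>BB. B \<inter> Q \<noteq> {}} = {}"
    using avoid by meson
  have "B \<inter> Q = {}" if "B \<in> D" for B
    using that D DD by auto
  with D(1) show ?thesis
    by auto
qed

section \<open>Query complexity on the promise\<close>

fun queries :: "dtree \<Rightarrow> bool list \<Rightarrow> nat set" where
  "queries (Leaf b) x = {}"
| "queries (Node i l r) x = insert i (if x!i then queries r x else queries l x)"

lemma finite_queries: "finite (queries t x)"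
  by (induction t) auto

lemma card_queries_le: "card (queries t x) \<le> qcount t x"
  by (induction t) (auto simp: card_insert_if finite_queries intro: le_SucI)

lemma eval_flip_unqueried:
  "valid N t \<Longrightarrow> length z = N \<Longrightarrow> A \<inter> queries t z = {} \<Longrightarrow> eval t (flip A z) = eval t z"
  by (induction t) auto

lemma qcount_eq_0: "qcount t x = 0 \<Longrightarrow> \<exists>c. t = Leaf c"
  by (cases t) auto

definition flip_detector :: "bool list \<Rightarrow> bool \<Rightarrow> nat \<Rightarrow> dtree" where
  "flip_detector z v i = Node i (Leaf (if z!i then \<not> v else v)) (Leaf (if z!i then v else \<not> v))"

lemma eval_flip_detector [simp]: "eval (flip_detector z v i) x = (if x!i = z!i then v else \<not> v)"
  by (simp add: flip_detector_def)

lemma qcount_flip_detector [simp]: "qcount (flip_detector z v i) x = 1"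
  by (simp add: flip_detector_def)

text \<open>
  The algorithm queries one position of a uniformly random block of \<open>U\<close> and reports whether it
  differs from \<open>z\<close>. On \<open>flip (\<Union>D) z\<close> it can only err on the blocks of \<open>U - D\<close>.
\<close>

lemma R_alg_one_query:
  assumes z: "z \<in> cube N" and U: "finite U" "U \<noteq> {}" "\<forall>B\<in>U. B \<noteq> {} \<and> B \<subseteq> {..<N}"
    and DD: "\<forall>D\<in>DD. D \<subseteq> U \<and> 2 * card U \<le> 3 * card D \<and> f (flip (\<Union>D) z) \<noteq> f z"
  shows "R_alg N f (insert z ((\<lambda>D. flip (\<Union>D) z) ` DD)) 1"
proof -
  define pos where "pos B = (SOME i. i \<in> B)" for B :: "nat set"
  have pos: "pos B \<in> B" if "B \<in> U" for B
    using that U(3) unfolding pos_def by (metis some_in_eq)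
  define tr where "tr B = flip_detector z (f z) (pos B)" for B
  define A where "A = map_pmf tr (pmf_of_set U)"
  have setA: "set_pmf A = tr ` U"
    using U(1,2) by (simp add: A_def)
  have error: "measure_pmf.prob A {t. eval t x \<noteq> f x} \<le> 1/3"
    if x: "x \<in> insert z ((\<lambda>D. flip (\<Union>D) z) ` DD)" for x
  proof -
    let ?wrong = "{B \<in> U. eval (tr B) x \<noteq> f x}"
    have prob: "measure_pmf.prob A {t. eval t x \<noteq> f x} = card ?wrong / card U"
      using U(1,2) by (simp add: A_def measure_pmf_of_set vimage_def Int_def conj_commute)
    show ?thesis
    proof (cases "x = z")
      case True
      then have "?wrong = {}"
        by (auto simp: tr_def)
      then have "card ?wrong = 0"
        by (simp only: card.empty)
      then show ?thesis
        unfolding prob by simp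
    next
      case False
      then obtain D where D: "D \<in> DD" "x = flip (\<Union>D) z"
        using x by blast
      have "?wrong \<subseteq> U - D"
      proof
        fix B assume B: "B \<in> ?wrong"
        show "B \<in> U - D"
        proof (rule ccontr)
          assume "B \<notin> U - D"
          then have "pos B \<in> \<Union>D" "pos B < N"
            using B pos U(3) by blast+
          then have "eval (tr B) x = f x"
            using D DD z by (simp add: tr_def cube_def)
          then show False
            using B by blast
        qed
      qed
      then have "card ?wrong \<le> card U - card D"
        using U(1) DD D(1) by (metis card_Diff_subset card_mono finite_Diff finite_subset)
      then have "3 * card ?wrong \<le> card U"
        using DD D(1) by fastforce
      moreover have "card U > 0"
        using U(1,2) by (simp add: card_gt_0_iff)
      ultimately show ?thesis
        unfolding prob by (simp add: divide_simps)
    qed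
  qed
  have "valid_alg N A"
    using pos U(3) by (auto simp: valid_alg_def setA tr_def flip_detector_def)
  then show ?thesis
    unfolding R_alg_def using error by (intro exI[of _ A]) (auto simp: setA tr_def)
qed

lemma R_eq_1:
  assumes "R_alg N f P 1" "x \<in> P" "y \<in> P" "f x \<noteq> f y"
  shows "R N f P = 1"
proof -
  have "\<not> R_alg N f P 0"
  proof
    assume "R_alg N f P 0"
    then obtain A where err: "\<forall>x\<in>P. measure_pmf.prob A {t. eval t x \<noteq> f x} \<le> 1/3"
      and no_queries: "\<forall>t\<in>set_pmf A. \<forall>x\<in>P. qcount t x \<le> 0"
      unfolding R_alg_def by blast
    let ?E = "\<lambda>x. {t. eval t x \<noteq> f x}"
    have "t \<in> ?E x \<union> ?E y" if "t \<in> set_pmf A" for t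
      using qcount_eq_0[of t x] no_queries that assms(2-4) by auto
    then have "measure_pmf.prob A (?E x \<union> ?E y) = 1"
      by (subst measure_pmf.prob_eq_1) (auto simp: AE_measure_pmf_iff)
    moreover have "measure_pmf.prob A (?E x \<union> ?E y) \<le> measure_pmf.prob A (?E x) + measure_pmf.prob A (?E y)"
      by (rule measure_Un_le) auto
    moreover have "measure_pmf.prob A (?E x) \<le> 1/3" "measure_pmf.prob A (?E y) \<le> 1/3"
      using err assms(2,3) by auto
    ultimately show False
      by linarith
  qed
  then show ?thesis
    unfolding R_def using assms(1) by (intro Least_equality) (auto simp: Suc_le_eq intro: gr0I)
qed

definition zero_error_algs :: "nat \<Rightarrow> (bool list \<Rightarrow> bool) \<Rightarrow> bool list set \<Rightarrow> dtree pmf set" where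
  "zero_error_algs N f P = {A. valid_alg N A \<and> (\<forall>t\<in>set_pmf A. \<forall>x\<in>P. eval t x = f x)}"

definition expected_queries :: "dtree pmf \<Rightarrow> bool list \<Rightarrow> ennreal" where
  "expected_queries A x = (\<integral>\<^sup>+ t. ennreal (real (qcount t x)) \<partial>measure_pmf A)"

lemma R0_eq: "R0 N f P = enn2real (INF A\<in>zero_error_algs N f P. SUP x\<in>P. expected_queries A x)"
  by (simp add: R0_def zero_error_algs_def expected_queries_def)

lemma zero_error_cost_le_depth:
  assumes "computable_within N f S d"
  shows "(INF A\<in>zero_error_algs N f S. SUP x\<in>S. expected_queries A x) \<le> ennreal d"
proof -
  obtain t where t: "valid N t" "\<forall>x\<in>S. eval t x = f x \<and> qcount t x \<le> d"
    using assms unfolding computable_within_def by blast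
  have "return_pmf t \<in> zero_error_algs N f S"
    using t by (simp add: zero_error_algs_def valid_alg_def)
  moreover have "(SUP x\<in>S. expected_queries (return_pmf t) x) \<le> ennreal d"
    using t by (intro SUP_least) (simp add: expected_queries_def ennreal_leI)
  ultimately show ?thesis
    by (rule INF_lower2)
qed

lemma R0_le_depth: "computable_within N f S d \<Longrightarrow> R0 N f S \<le> d"
  unfolding R0_eq by (metis enn2real_ennreal enn2real_mono ennreal_less_top of_nat_0_le_iff
    zero_error_cost_le_depth)

text \<open>
  The depth-\<open>d\<close> tree only makes the infimum in \<open>R0\<close> finite, which is needed because
  \<open>enn2real\<close> sends \<open>\<infinity>\<close> to \<open>0\<close>.
\<close>

lemma R0_ge:
  assumes z: "z \<in> P" and "computable_within N f P d"
    and lower: "\<And>t. valid N t \<Longrightarrow> \<forall>x\<in>P. eval t x = f x \<Longrightarrow> c \<le> real (qcount t z)"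
  shows "c \<le> R0 N f P"
proof (cases "c \<le> 0")
  case True
  then show ?thesis
    by (simp add: R0_def order_trans[OF _ enn2real_nonneg])
next
  case False
  have "ennreal c \<le> (INF A\<in>zero_error_algs N f P. SUP x\<in>P. expected_queries A x)"
  proof (rule INF_greatest)
    fix A assume A: "A \<in> zero_error_algs N f P"
    have "ennreal c = (\<integral>\<^sup>+ t. ennreal c \<partial>measure_pmf A)"
      by (simp add: measure_pmf.emeasure_space_1)
    also have "\<dots> \<le> expected_queries A z"
      unfolding expected_queries_def using A lower
      by (intro nn_integral_mono_AE) (auto simp: AE_measure_pmf_iff zero_error_algs_def
          valid_alg_def intro!: ennreal_leI)
    also have "\<dots> \<le> (SUP x\<in>P. expected_queries A x)"
      using z by (rule SUP_upper)
    finally show "ennreal c \<le> (SUP x\<in>P. expected_queries A x)" .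
  qed
  then have "enn2real (ennreal c) \<le> R0 N f P"
    unfolding R0_eq using zero_error_cost_le_depth[OF assms(2)]
    by (intro enn2real_mono) (auto simp: order.strict_trans1)
  with False show ?thesis
    by simp
qed

text \<open>A tree that queries no position of \<open>\<Union>D\<close> on \<open>z\<close> cannot tell \<open>z\<close> from \<open>flip (\<Union>D) z\<close>.\<close>

lemma qcount_ge_on_flip_promise:
  assumes t: "valid N t" "\<forall>x\<in>insert z ((\<lambda>D. flip (\<Union>D) z) ` DD). eval t x = f x"
    and z: "length z = N" and DD: "\<forall>D\<in>DD. f (flip (\<Union>D) z) \<noteq> f z"
    and hit: "\<And>Q. finite Q \<Longrightarrow> 6 * card Q < b \<Longrightarrow> \<exists>D\<in>DD. \<Union>D \<inter> Q = {}"
  shows "b \<le> 6 * qcount t z"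
proof (rule ccontr)
  assume "\<not> b \<le> 6 * qcount t z"
  then have "6 * card (queries t z) < b"
    using card_queries_le[of t z] by linarith
  from hit[OF finite_queries this] obtain D where D: "D \<in> DD" "\<Union>D \<inter> queries t z = {}"
    by meson
  have "f (flip (\<Union>D) z) = eval t (flip (\<Union>D) z)"
    using t(2) D(1) by simp
  also have "\<dots> = eval t z"
    by (rule eval_flip_unqueried[OF t(1) z D(2)])
  also have "\<dots> = f z"
    using t(2) by simp
  finally show False
    using DD D(1) by simp
qed

lemma hard_promise:
  assumes "x \<in> cube N" "y \<in> cube N" "f x \<noteq> f y"
  obtains P where "P \<subseteq> cube N" "R N f P = 1" "real (bs N f) / 6 \<le> R0 N f P"
proof -
  obtain x0 BB where x0: "x0 \<in> cube N" "sensitive_blocks N f x0 BB" "card BB = bs N f"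
    by (rule bs_attained)
  obtain z U DD where z: "z \<in> cube N" and U: "U \<subseteq> BB" "U \<noteq> {}"
    and DD: "\<forall>D\<in>DD. D \<subseteq> U \<and> 2 * card U \<le> 3 * card D \<and> f (flip (\<Union>D) z) \<noteq> f z"
    and avoid: "\<forall>H\<subseteq>BB. 6 * card H < bs N f \<longrightarrow> (\<exists>D\<in>DD. D \<inter> H = {})"
    by (rule hard_subfamilies[OF x0 bs_pos[OF assms]])
  have disjoint: "pairwise disjnt BB" and blocks: "\<forall>B\<in>U. B \<noteq> {} \<and> B \<subseteq> {..<N}"
    using x0(2) U(1) unfolding sensitive_blocks_def by auto
  have "finite U"
    using U(1) sensitive_blocks_finite[OF x0(2)] by (rule finite_subset)
  have DD_blocks: "\<forall>D\<in>DD. D \<subseteq> BB"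
    using DD U(1) by blast
  have hit: "\<And>Q. finite Q \<Longrightarrow> 6 * card Q < bs N f \<Longrightarrow> \<exists>D\<in>DD. \<Union>D \<inter> Q = {}"
    using avoid_few_positions[OF disjoint DD_blocks avoid] .
  define P where "P = insert z ((\<lambda>D. flip (\<Union>D) z) ` DD)"
  have P: "P \<subseteq> cube N"
    using z by (auto simp: P_def)
  have "\<exists>D\<in>DD. \<Union>D \<inter> {} = {}"
    using bs_pos[OF assms] by (intro hit) simp_all
  then obtain D0 where "D0 \<in> DD"
    by meson
  have R: "R N f P = 1"
  proof (rule R_eq_1)
    show "R_alg N f P 1"
      unfolding P_def by (rule R_alg_one_query[OF z \<open>finite U\<close> U(2) blocks DD])
    show "z \<in> P" "flip (\<Union>D0) z \<in> P" "f z \<noteq> f (flip (\<Union>D0) z)"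
      using \<open>D0 \<in> DD\<close> DD by (auto simp: P_def)
  qed
  have R0: "real (bs N f) / 6 \<le> R0 N f P"
  proof (rule R0_ge)
    show "z \<in> P"
      by (simp add: P_def)
    show "computable_within N f P (bs N f ^ 3)"
      using computable_within_bs_cube P by (rule computable_within_mono) simp
    fix t assume t: "valid N t" "\<forall>x\<in>P. eval t x = f x"
    have "length z = N" "\<forall>D\<in>DD. f (flip (\<Union>D) z) \<noteq> f z"
      using z DD by (simp_all add: cube_def)
    from qcount_ge_on_flip_promise[OF t(1) t(2)[unfolded P_def] this hit]
    have "bs N f \<le> 6 * qcount t z" .
    then show "real (bs N f) / 6 \<le> real (qcount t z)"
      by linarith
  qed
  show thesis
    by (rule that[OF P R R0])
qed

lemma powr_one_third_le:
  fixes r a :: real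
  assumes "0 \<le> r" "0 \<le> a" "r \<le> a ^ 3"
  shows "r powr (1/3) \<le> a"
proof -
  have "r powr (1/3) \<le> (a ^ 3) powr (1/3)"
    using assms by (intro powr_mono2) auto
  also have "(a ^ 3) powr (1/3) = (a powr 3) powr (1/3)"
    using assms(2) by simp
  also have "\<dots> = a"
    using assms(2) by (simp only: powr_powr) simp
  finally show ?thesis .
qed

theorem theorem29:
  fixes N :: nat and f :: "bool list \<Rightarrow> bool"
  assumes "\<exists>x\<in>cube N. \<exists>y\<in>cube N. f x \<noteq> f y"
  shows "\<exists>P \<subseteq> cube N. R N f P = 1 \<and> R0 N f P \<ge> R0 N f (cube N) powr (1/3) / 6"
proof -
  from assms obtain x y where "x \<in> cube N" "y \<in> cube N" "f x \<noteq> f y"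
    by blast
  then obtain P where P: "P \<subseteq> cube N" "R N f P = 1" "real (bs N f) / 6 \<le> R0 N f P"
    by (rule hard_promise)
  have "R0 N f (cube N) \<le> real (bs N f) ^ 3"
    using R0_le_depth[OF computable_within_bs_cube] by simp
  then have "R0 N f (cube N) powr (1/3) \<le> real (bs N f)"
    by (intro powr_one_third_le) (simp_all add: R0_def)
  with P show ?thesis
    by (intro exI[of _ P]) auto
qed

end
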